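(* Let $n\ge1$ and let $\mathbf{u}_0,\dots,\mathbf{u}_n$ be linearly independent unit vectors in $\mathbf{C}^{n+1}$. For a nonzero $\mathbf{c}$ let $H_{\mathbf{c}}=\{[\mathbf{x}]\in\mathbf{CP}^n:\mathbf{c}\cdot\mathbf{x}=0\}$; the hyperplanes $H_{\mathbf{u}_0},\dots,H_{\mathbf{u}_n}$ are the faces of a projective simplex. For each $j$ let $P_j$ be the unique point of $\bigcap_{i\ne j}H_{\mathbf{u}_i}$ (the vertex opposite $H_{\mathbf{u}_j}$), let $d_j$ be the Fubini–Study distance from $P_j$ to $H_{\mathbf{u}_j}$, and let $d_{\min}=\min_j d_j$. Then $$d_{\min}^n\le|\det(\mathbf{u}_0,\dots,\mathbf{u}_n)|\le d_{\min}.$$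
   Context: The dot product on $\mathbf{C}^{n+1}$ is the bilinear form $\mathbf{a}\cdot\mathbf{b}=\sum_i a_ib_i$ (standard basis $\mathbf{e}_0,\dots,\mathbf{e}_n$), and $|\mathbf{a}|^2=\mathbf{a}\cdot\overline{\mathbf{a}}$. On $\Lambda^k\mathbf{C}^{n+1}$ the basis $\mathbf{e}_{i_1}\wedge\dots\wedge\mathbf{e}_{i_k}$ is declared orthonormal, giving a norm $|\omega|^2=\omega\cdot\overline\omega$. $\mathbf{CP}^n$ is the set of classes $[\mathbf{v}]$ of nonzero vectors modulo nonzero scalars. The Fubini–Study distance between points represented by unit vectors $\mathbf{v},\mathbf{w}$ is $|\mathbf{v}\wedge\mathbf{w}|$; the distance from a point $[\mathbf{u}]$ ($|\mathbf{u}|=1$) to a hyperplane $H_{\mathbf{c}}$ is $\min\{|\mathbf{u}\wedge\mathbf{x}|:\mathbf{c}\cdot\mathbf{x}=0,\ |\mathbf{x}|=1\}$. $\det(\mathbf{u}_0,\dots,\mathbf{u}_n)$ is the determinant of the matrix with these rows. *)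

theory Defs
  imports "HOL-Analysis.Analysis"
begin

text \<open>Vectors of C^{n+1} are modelled as complex ^ 'n with CARD('n) = n+1.\<close>

text \<open>Bilinear dot product a . b = sum_i a_i b_i (no conjugation).\<close>
definition cdot :: "complex^'n \<Rightarrow> complex^'n \<Rightarrow> complex" where
  "cdot a b = (\<Sum>i\<in>UNIV. a$i * b$i)"

text \<open>Norm of v \<and> w in Lambda^2 with orthonormal basis e_i \<and> e_j (i<j):
  |v\<and>w|^2 = sum_{i<j} |v_i w_j - v_j w_i|^2, written as half the sum over all ordered pairs.\<close>
definition wedge_norm :: "complex^'n \<Rightarrow> complex^'n \<Rightarrow> real" where
  "wedge_norm v w = sqrt ((\<Sum>i\<in>UNIV. \<Sum>j\<in>UNIV. (cmod (v$i * w$j - v$j * w$i))\<^sup>2) / 2)"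

definition lin_indep_family :: "('i::finite \<Rightarrow> complex^'n) \<Rightarrow> bool" where
  "lin_indep_family u \<longleftrightarrow> (\<forall>a. (\<Sum>i\<in>UNIV. a i *s u i) = 0 \<longrightarrow> (\<forall>i. a i = 0))"

text \<open>Fubini--Study distance from the point [q] (q a unit vector) to the hyperplane H_c.\<close>
definition dist_pt_hyp :: "complex^'n \<Rightarrow> complex^'n \<Rightarrow> real" where
  "dist_pt_hyp q c = Inf {wedge_norm q x | x. cdot c x = 0 \<and> norm x = 1}"

end

theory Submission
  imports Defs
begin

(*
  Idea of the proof.  Write e_j = u_j . P_j.  Two facts carry the argument:

  (1) Distance formula: for unit vectors q, c the Fubini--Study distance from [q]
      to H_c is |c . q|.  By the Lagrange identity |q \<and> x|^2 = 1 - |<q,x>|^2 for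
      unit x, and over unit x in H_c the Hermitian product <q,x> is maximised by the
      normalised projection of q onto H_c, whose squared length is 1 - |c . q|^2.
      Hence d_j = |e_j|.

  (2) Determinant bound: if A has unit rows and a unit vector b is annihilated by
      every row of A except row j, then |det A| <= |A_j . b|.  Split A_j into a part
      annihilating b (this part contributes a singular matrix) plus (A_j . b) times
      the conjugate of b, and bound the remaining determinant by Hadamard's
      inequality, proved here by Gram--Schmidt orthogonalisation of the rows.

  Applying (2) to U and to the matrix V of the vertices gives |det U| <= d_min and
  |det V| <= d_min.  Since U V^T is diagonal with entries e_j,
  d_min^(n+1) <= prod_j d_j = |det U| |det V| <= |det U| d_min, whence the lower bound.
*)

section \<open>The Hermitian product on complex vectors\<close>

definition herm :: "complex^'n \<Rightarrow> complex^'n \<Rightarrow> complex" where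
  "herm x y = (\<Sum>i\<in>UNIV. x$i * cnj (y$i))"

definition conj_vec :: "complex^'n \<Rightarrow> complex^'n" where
  "conj_vec b = (\<chi> k. cnj (b$k))"

lemma norm_sq_vec: "(norm (x::complex^'n))\<^sup>2 = (\<Sum>i\<in>UNIV. (cmod (x$i))\<^sup>2)"
  unfolding norm_vec_def L2_set_def by (simp add: sum_nonneg)

lemma herm_self: "herm x x = of_real ((norm x)\<^sup>2)"
  unfolding herm_def norm_sq_vec of_real_sum
  by (rule sum.cong) (simp_all add: complex_norm_square[symmetric])

lemma herm_self_zero: "herm x x = 0 \<longleftrightarrow> x = 0"
  unfolding herm_self by simp

lemma herm_sym: "herm y x = cnj (herm x y)"
  unfolding herm_def by (simp add: mult.commute)

lemma herm_zero_left [simp]: "herm 0 z = 0"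
  and herm_zero_right [simp]: "herm z 0 = 0"
  unfolding herm_def by simp_all

lemma herm_add_left: "herm (x + y) z = herm x z + herm y z"
  unfolding herm_def by (simp add: distrib_right sum.distrib)

lemma herm_diff_left: "herm (x - y) z = herm x z - herm y z"
  unfolding herm_def by (simp add: left_diff_distrib sum_subtractf)

lemma herm_scale_left: "herm (c *s x) z = c * herm x z"
  unfolding herm_def by (simp add: sum_distrib_left mult.assoc)

lemma herm_sum_left: "herm (sum f S) z = (\<Sum>i\<in>S. herm (f i) z)"
  unfolding herm_def by (simp add: sum_distrib_right; rule sum.swap)

lemma herm_add_right: "herm z (x + y) = herm z x + herm z y"
  by (metis herm_sym herm_add_left complex_cnj_add)

lemma herm_scale_right: "herm z (c *s x) = cnj c * herm z x"
  by (metis herm_sym herm_scale_left complex_cnj_mult)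

lemma herm_sum_right: "herm z (sum f S) = (\<Sum>i\<in>S. herm z (f i))"
  unfolding herm_def by (simp add: sum_distrib_left; rule sum.swap)

lemma herm_conj_vec: "herm x (conj_vec c) = cdot c x"
  unfolding herm_def conj_vec_def cdot_def by (simp add: mult.commute)

lemma cdot_conj_vec: "cdot (conj_vec c) x = herm x c"
  unfolding herm_def conj_vec_def cdot_def by (simp add: mult.commute)

lemma norm_conj_vec: "norm (conj_vec b) = norm b"
  unfolding conj_vec_def norm_vec_def by simp

lemma pythagoras:
  assumes "herm a b = 0"
  shows "(norm (a + b))\<^sup>2 = (norm a)\<^sup>2 + (norm b)\<^sup>2"
proof -
  have "herm b a = 0" using assms herm_sym by (metis complex_cnj_zero)
  then have "herm (a + b) (a + b) = herm a a + herm b b"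
    using assms by (simp add: herm_add_left herm_add_right)
  then show ?thesis unfolding herm_self by (metis of_real_add of_real_eq_iff)
qed

lemma norm_vec_smult: "norm (c *s (x::complex^'n)) = cmod c * norm x"
proof -
  have "herm (c *s x) (c *s x) = (c * cnj c) * herm x x"
    by (simp add: herm_scale_left herm_scale_right mult.assoc)
  then have "complex_of_real ((norm (c *s x))\<^sup>2) = complex_of_real ((cmod c * norm x)\<^sup>2)"
    by (simp only: herm_self complex_norm_square of_real_mult power_mult_distrib)
  then have "(norm (c *s x))\<^sup>2 = (cmod c * norm x)\<^sup>2" using of_real_eq_iff by blast
  then show ?thesis by (rule power2_eq_imp_eq) auto
qed

lemma cdot_comm: "cdot a b = cdot b a"
  unfolding cdot_def by (simp add: mult.commute)

lemma cdot_diff_left: "cdot (x - y) z = cdot x z - cdot y z"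
  unfolding cdot_def by (simp add: left_diff_distrib sum_subtractf)

lemma cdot_scale_left: "cdot (c *s x) z = c * cdot x z"
  unfolding cdot_def by (simp add: sum_distrib_left mult.assoc)

section \<open>Hadamard's inequality\<close>

definition gs_residual :: "'i set \<Rightarrow> ('i \<Rightarrow> complex^'n) \<Rightarrow> complex^'n \<Rightarrow> complex^'n" where
  "gs_residual G a v = v - (\<Sum>i\<in>G. (herm v (a i) / herm (a i) (a i)) *s a i)"

definition pairwise_orth :: "'i set \<Rightarrow> ('i \<Rightarrow> complex^'n) \<Rightarrow> bool" where
  "pairwise_orth G a \<longleftrightarrow> (\<forall>i\<in>G. \<forall>k\<in>G. i \<noteq> k \<longrightarrow> herm (a i) (a k) = 0)"

lemma gs_residual_orth:
  assumes "finite G" "pairwise_orth G a" "k \<in> G"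
  shows "herm (gs_residual G a v) (a k) = 0"
proof -
  let ?c = "\<lambda>i. herm v (a i) / herm (a i) (a i)"
  have "herm (\<Sum>i\<in>G. ?c i *s a i) (a k) = (\<Sum>i\<in>G. ?c i * herm (a i) (a k))"
    by (simp add: herm_sum_left herm_scale_left)
  also have "\<dots> = ?c k * herm (a k) (a k)"
    using assms by (intro sum.remove[THEN trans]) (auto simp: pairwise_orth_def intro!: sum.neutral)
  also have "\<dots> = herm v (a k)"
    by (cases "a k = 0") (simp_all add: herm_self_zero)
  finally show ?thesis unfolding gs_residual_def by (simp add: herm_diff_left)
qed

lemma norm_gs_residual_le:
  assumes "finite G" "pairwise_orth G a"
  shows "norm (gs_residual G a v) \<le> norm v"
proof -
  define p where "p = (\<Sum>i\<in>G. (herm v (a i) / herm (a i) (a i)) *s a i)"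
  have "herm (gs_residual G a v) p = 0"
    unfolding p_def herm_sum_right herm_scale_right using gs_residual_orth[OF assms] by simp
  then have "(norm v)\<^sup>2 = (norm (gs_residual G a v))\<^sup>2 + (norm p)\<^sup>2"
    using pythagoras[of "gs_residual G a v" p] by (simp add: gs_residual_def p_def)
  then show ?thesis by (simp add: power2_le_imp_le)
qed

lemma det_gs_residual:
  fixes A :: "complex^'n^'n"
  assumes "j \<notin> G"
  shows "det (\<chi> k. if k = j then gs_residual G (\<lambda>i. A$i) (A$j) else A$k) = det A"
proof -
  let ?x = "- (\<Sum>i\<in>G. (herm (A$j) (A$i) / herm (A$i) (A$i)) *s row i A)"
  have rows: "row i A = A$i" for i by (simp add: row_def vec_eq_iff)
  have "?x \<in> vec.span {row i A | i. i \<noteq> j}"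
    using assms by (intro vec.span_neg vec.span_sum vec.span_scale vec.span_base) auto
  then have "det (\<chi> k. if k = j then row j A + ?x else row k A) = det A"
    by (rule det_row_span)
  moreover have "(\<chi> k. if k = j then row j A + ?x else row k A)
      = (\<chi> k. if k = j then gs_residual G (\<lambda>i. A$i) (A$j) else A$k)"
    by (simp add: vec_eq_iff gs_residual_def rows)
  ultimately show ?thesis by simp
qed

lemma det_conj_transpose: "det (\<chi> i j. cnj ((A::complex^'n^'n)$j$i)) = cnj (det A)"
proof -
  have "det (\<chi> i j. cnj (A$i$j)) = cnj (det A)"
    unfolding det_def by simp
  moreover have "(\<chi> i j. cnj (A$j$i)) = transpose (\<chi> i j. cnj (A$i$j))"
    by (simp add: transpose_def)
  ultimately show ?thesis by simp
qed

text \<open>For pairwise orthogonal rows, A A^* is diagonal, so |det A| is the product of the row norms.\<close>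
lemma det_orthogonal_rows:
  fixes A :: "complex^'n^'n"
  assumes "pairwise_orth UNIV (\<lambda>i. A$i)"
  shows "cmod (det A) = (\<Prod>i\<in>UNIV. norm (A$i))"
proof -
  let ?C = "(\<chi> i j. cnj (A$j$i)) :: complex^'n^'n"
  have entries: "(A ** ?C)$i$k = herm (A$i) (A$k)" for i k
    by (simp add: matrix_matrix_mult_def herm_def)
  have "det (A ** ?C) = (\<Prod>i\<in>UNIV. herm (A$i) (A$i))"
    by (rule trans[OF det_diagonal]) (use assms in \<open>auto simp: entries pairwise_orth_def\<close>)
  then have "det A * cnj (det A) = of_real (\<Prod>i\<in>UNIV. (norm (A$i))\<^sup>2)"
    by (simp add: det_mul det_conj_transpose herm_self)
  then have "complex_of_real ((cmod (det A))\<^sup>2) = complex_of_real ((\<Prod>i\<in>UNIV. norm (A$i))\<^sup>2)"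
    by (simp add: complex_norm_square[symmetric] prod_power_distrib)
  then have "(cmod (det A))\<^sup>2 = (\<Prod>i\<in>UNIV. norm (A$i))\<^sup>2" using of_real_eq_iff by blast
  then show ?thesis by (rule power2_eq_imp_eq) (auto intro: prod_nonneg)
qed

lemma pairwise_orth_gs_extend:
  assumes "finite G" "pairwise_orth G a" "j \<notin> G"
  shows "pairwise_orth (insert j G) (a(j := gs_residual G a (a j)))"
  unfolding pairwise_orth_def
proof (intro ballI impI)
  fix i k assume "i \<in> insert j G" "k \<in> insert j G" "i \<noteq> k"
  then consider "i = j" "k \<in> G" | "k = j" "i \<in> G" | "i \<in> G" "k \<in> G" "i \<noteq> k"
    by blast
  then show "herm ((a(j := gs_residual G a (a j))) i) ((a(j := gs_residual G a (a j))) k) = 0"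
  proof cases
    case 1
    then show ?thesis using assms gs_residual_orth by auto
  next
    case 2
    then show ?thesis using assms gs_residual_orth herm_sym[of "a i"] by fastforce
  next
    case 3
    then show ?thesis using assms by (auto simp: pairwise_orth_def)
  qed
qed

text \<open>Induction on the set F of rows not yet orthogonalised; each step orthogonalises one row
  against the others, keeping the determinant and not increasing that row's norm.\<close>
theorem hadamard_inequality:
  fixes A :: "complex^'n^'n"
  shows "cmod (det A) \<le> (\<Prod>i\<in>UNIV. norm (A$i))"
proof -
  have "pairwise_orth (- F) (\<lambda>i. A$i) \<Longrightarrow> cmod (det A) \<le> (\<Prod>i\<in>UNIV. norm (A$i))"
    if "finite F" for F :: "'n set" and A :: "complex^'n^'n"
    using that
  proof (induction F arbitrary: A rule: finite_induct)
    case empty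
    then show ?case using det_orthogonal_rows[of A] by simp
  next
    case (insert j F)
    define G where "G = - insert j F"
    define r where "r = gs_residual G (\<lambda>i. A$i) (A$j)"
    define A' where "A' = (\<chi> k. if k = j then r else A$k)"
    have G: "finite G" "j \<notin> G" "- F = insert j G"
      using insert.hyps by (auto simp: G_def)
    have rows_A': "(\<lambda>i. A'$i) = (\<lambda>i. A$i)(j := r)"
      by (auto simp: A'_def)
    have "pairwise_orth (- F) (\<lambda>i. A'$i)"
      unfolding rows_A' G(3) r_def
      using pairwise_orth_gs_extend[OF G(1) insert.prems[folded G_def] G(2)] .
    have "cmod (det A) = cmod (det A')"
      unfolding A'_def r_def det_gs_residual[OF G(2)] ..
    also have "\<dots> \<le> (\<Prod>i\<in>UNIV. norm (A'$i))"
      by (rule insert.IH) fact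
    also have "\<dots> \<le> (\<Prod>i\<in>UNIV. norm (A$i))"
      using norm_gs_residual_le[OF G(1) insert.prems[folded G_def]]
      by (intro prod_mono) (simp add: A'_def r_def)
    finally show ?case .
  qed
  from this[of UNIV A] show ?thesis by (simp add: pairwise_orth_def)
qed

section \<open>Determinant bounds from dual vectors\<close>

lemma det_zero_if_kernel:
  fixes A :: "'a::field^'n^'n"
  assumes "A *v x = 0" "x \<noteq> 0"
  shows "det A = 0"
  using assms by (metis invertible_det_nz invertible_left_inverse matrix_left_invertible_ker)

text \<open>Writing
  A_j = w + (A_j . b) conj b with w . b = 0, the matrix with row j replaced by w kills b,
  and the matrix with row j replaced by conj b has unit rows, so Hadamard applies.\<close>
lemma det_le_dot_of_annihilated:
  fixes A :: "complex^'n^'n" and b :: "complex^'n"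
  assumes unit_rows: "\<forall>i. norm (A$i) = 1" and unit_b: "norm b = 1"
    and annihilated: "\<forall>i. i \<noteq> j \<longrightarrow> cdot (A$i) b = 0"
  shows "cmod (det A) \<le> cmod (cdot (A$j) b)"
proof -
  define \<alpha> where "\<alpha> = cdot (A$j) b"
  define w where "w = A$j - \<alpha> *s conj_vec b"
  define replace_j where "replace_j x = (\<chi> k. if k = j then x else A$k)" for x :: "complex^'n"
  have "cdot (conj_vec b) b = 1"
    using unit_b by (simp add: cdot_conj_vec herm_self)
  then have wb: "cdot w b = 0"
    unfolding w_def by (simp add: cdot_diff_left cdot_scale_left \<alpha>_def)
  have "replace_j (w + \<alpha> *s conj_vec b) = A"
    by (simp add: replace_j_def w_def vec_eq_iff)
  moreover have "det (replace_j (w + \<alpha> *s conj_vec b))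
      = det (replace_j w) + \<alpha> * det (replace_j (conj_vec b))"
    by (simp add: replace_j_def det_row_add det_row_mul)
  ultimately have "det A = det (replace_j w) + \<alpha> * det (replace_j (conj_vec b))"
    by simp
  moreover have "det (replace_j w) = 0"
  proof (rule det_zero_if_kernel)
    show "replace_j w *v b = 0"
      using wb annihilated by (auto simp: replace_j_def vec_eq_iff matrix_vector_mult_def cdot_def)
    show "b \<noteq> 0" using unit_b by auto
  qed
  moreover have "cmod (det (replace_j (conj_vec b))) \<le> 1"
  proof -
    have "cmod (det (replace_j (conj_vec b))) \<le> (\<Prod>i\<in>UNIV. norm (replace_j (conj_vec b) $ i))"
      by (rule hadamard_inequality)
    also have "\<dots> = 1"
      using unit_rows unit_b by (intro prod.neutral) (simp add: replace_j_def norm_conj_vec)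
    finally show ?thesis .
  qed
  ultimately show ?thesis
    by (simp add: \<alpha>_def norm_mult mult_left_le)
qed

text \<open>If the rows of A and B are biorthogonal up to scaling, A B^T is diagonal.\<close>
lemma det_mult_biorthogonal:
  fixes A B :: "complex^'n^'n"
  assumes "\<forall>i j. i \<noteq> j \<longrightarrow> cdot (A$i) (B$j) = 0"
  shows "det A * det B = (\<Prod>j\<in>UNIV. cdot (A$j) (B$j))"
proof -
  have entries: "(A ** transpose B)$i$j = cdot (A$i) (B$j)" for i j
    by (simp add: matrix_matrix_mult_def transpose_def cdot_def)
  have "det (A ** transpose B) = (\<Prod>j\<in>UNIV. cdot (A$j) (B$j))"
    using assms by (subst det_diagonal) (simp_all add: entries)
  then show ?thesis by (simp add: det_mul)
qed

section \<open>The Fubini--Study distance from a point to a hyperplane\<close>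

lemma wedge_norm_sq:
  fixes v w :: "complex^'n"
  shows "(wedge_norm v w)\<^sup>2 = (norm v)\<^sup>2 * (norm w)\<^sup>2 - (cmod (herm v w))\<^sup>2"
proof -
  define S where "S = (\<Sum>i\<in>UNIV. \<Sum>j\<in>UNIV. (cmod (v$i * w$j - v$j * w$i))\<^sup>2)"
  have expand: "(v$i * w$j - v$j * w$i) * cnj (v$i * w$j - v$j * w$i)
      = (v$i * cnj (v$i)) * (w$j * cnj (w$j)) + (w$i * cnj (w$i)) * (v$j * cnj (v$j))
        - (v$i * cnj (w$i)) * (w$j * cnj (v$j)) - (w$i * cnj (v$i)) * (v$j * cnj (w$j))" for i j
    by (simp add: algebra_simps)
  have "complex_of_real S
      = (\<Sum>i\<in>UNIV. \<Sum>j\<in>UNIV. (v$i * w$j - v$j * w$i) * cnj (v$i * w$j - v$j * w$i))"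
    by (simp add: S_def complex_norm_square del: of_real_power)
  also have "\<dots> = herm v v * herm w w + herm w w * herm v v
      - herm v w * herm w v - herm w v * herm v w"
    unfolding expand herm_def sum_product by (simp add: sum_subtractf sum.distrib)
  also have "\<dots> = complex_of_real (2 * ((norm v)\<^sup>2 * (norm w)\<^sup>2 - (cmod (herm v w))\<^sup>2))"
    by (simp add: herm_self herm_sym[of w v] complex_norm_square del: of_real_power)
  finally have "S = 2 * ((norm v)\<^sup>2 * (norm w)\<^sup>2 - (cmod (herm v w))\<^sup>2)"
    using of_real_eq_iff by blast
  moreover have "0 \<le> S" unfolding S_def by (intro sum_nonneg) auto
  ultimately show ?thesis unfolding wedge_norm_def S_def[symmetric] by simp
qed

lemma wedge_norm_nonneg: "0 \<le> wedge_norm v w"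
  unfolding wedge_norm_def by (intro real_sqrt_ge_zero divide_nonneg_pos sum_nonneg) auto

lemma herm_cauchy_schwarz: "(cmod (herm v w))\<^sup>2 \<le> (norm v)\<^sup>2 * (norm w)\<^sup>2"
  using wedge_norm_sq[of v w] zero_le_power2[of "wedge_norm v w"] by linarith

lemma normalize_in_hyperplane:
  assumes "y \<noteq> 0" "cdot c y = 0"
  shows "norm (complex_of_real (1 / norm y) *s y) = 1"
    and "cdot c (complex_of_real (1 / norm y) *s y) = 0"
  using assms by (simp_all add: norm_vec_smult norm_divide cdot_comm[of c] cdot_scale_left)

lemma exists_unit_in_hyperplane:
  assumes "CARD('n) \<ge> 2"
  obtains x :: "complex^'n" where "norm x = 1" "cdot c x = 0"
proof -
  obtain i k :: 'n where ik: "i \<noteq> k"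
    using assms card_le_Suc0_iff_eq[of "UNIV :: 'n set"] by force
  define y where "y = (\<chi> l. if l = i then c$k else if l = k then - c$i else (0::complex))"
  have "cdot c y = (\<Sum>l\<in>UNIV. (if l = i then c$i * c$k else 0) + (if l = k then - c$k * c$i else 0))"
    unfolding cdot_def y_def using ik by (intro sum.cong) auto
  then have cy: "cdot c y = 0" by (simp add: sum.distrib)
  show ?thesis
  proof (cases "y = 0")
    case False
    then show ?thesis using that normalize_in_hyperplane[OF False cy] by blast
  next
    case True
    then have "c$i = 0" using ik by (simp add: y_def vec_eq_iff) (metis neg_equal_0_iff_equal)
    then have "cdot c (axis i 1) = 0"
      by (simp add: cdot_def axis_def if_distrib cong: if_cong)
    then show ?thesis using that[of "axis i 1"] by simp
  qed
qed

lemma hyperplane_decomposition: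
  fixes q c :: "complex^'n"
  assumes unit_c: "norm c = 1" and r_def: "r = q - cdot c q *s conj_vec c"
  shows "cdot c r = 0"
    and "\<And>x. cdot c x = 0 \<Longrightarrow> herm q x = herm r x"
    and "(norm r)\<^sup>2 = (norm q)\<^sup>2 - (cmod (cdot c q))\<^sup>2"
proof -
  have "cdot (conj_vec c) c = 1"
    using unit_c by (simp add: cdot_conj_vec herm_self)
  then show r_in_hyperplane: "cdot c r = 0"
    unfolding r_def by (simp add: cdot_comm[of c] cdot_diff_left cdot_scale_left)
  then have r_normal: "herm r (conj_vec c) = 0"
    by (simp add: herm_conj_vec)
  show "herm q x = herm r x" if "cdot c x = 0" for x
  proof -
    have "herm (conj_vec c) x = 0"
      using that herm_sym[of "conj_vec c" x] by (simp add: herm_conj_vec)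
    then show ?thesis by (simp add: r_def herm_diff_left herm_scale_left)
  qed
  have "herm r (cdot c q *s conj_vec c) = 0"
    by (simp add: herm_scale_right r_normal)
  then have "(norm (r + cdot c q *s conj_vec c))\<^sup>2 = (norm r)\<^sup>2 + (norm (cdot c q *s conj_vec c))\<^sup>2"
    by (rule pythagoras)
  then show "(norm r)\<^sup>2 = (norm q)\<^sup>2 - (cmod (cdot c q))\<^sup>2"
    using unit_c by (simp add: r_def norm_vec_smult norm_conj_vec)
qed

text \<open>For unit x in H_c, |q \<and> x|^2 = 1 - |<r,x>|^2 \<ge> 1 - |r|^2 = |c . q|^2 by Cauchy--Schwarz,
  with equality for x = r/|r| (or any unit x in H_c if r = 0).\<close>
lemma dist_pt_hyp_eq:
  fixes q c :: "complex^'n"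
  assumes card: "CARD('n) \<ge> 2" and unit_q: "norm q = 1" and unit_c: "norm c = 1"
  shows "dist_pt_hyp q c = cmod (cdot c q)"
proof -
  define r where "r = q - cdot c q *s conj_vec c"
  note decomp = hyperplane_decomposition[OF unit_c r_def]
  have wedge: "(wedge_norm q x)\<^sup>2 = 1 - (cmod (herm r x))\<^sup>2" if "cdot c x = 0" "norm x = 1" for x
    using wedge_norm_sq[of q x] that unit_q decomp(2) by simp
  have lower: "cmod (cdot c q) \<le> wedge_norm q x" if x: "cdot c x = 0" "norm x = 1" for x
  proof (rule power2_le_imp_le)
    show "(cmod (cdot c q))\<^sup>2 \<le> (wedge_norm q x)\<^sup>2"
      using herm_cauchy_schwarz[of r x] wedge[OF x] decomp(3) unit_q x by simp
  qed (rule wedge_norm_nonneg)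
  obtain x where x: "cdot c x = 0" "norm x = 1" and aligned: "cmod (herm r x) = norm r"
  proof (cases "r = 0")
    case True
    obtain x where "norm x = 1" "cdot c x = 0"
      using exists_unit_in_hyperplane[OF card] .
    then show ?thesis using that True by simp
  next
    case False
    have "herm r (complex_of_real (1 / norm r) *s r) = complex_of_real (norm r)"
      using False by (simp add: herm_scale_right herm_self power2_eq_square)
    then show ?thesis
      using that normalize_in_hyperplane[OF False decomp(1)] by simp
  qed
  have "(wedge_norm q x)\<^sup>2 = (cmod (cdot c q))\<^sup>2"
    using wedge[OF x] aligned decomp(3) unit_q by simp
  then have "wedge_norm q x = cmod (cdot c q)"
    by (rule power2_eq_imp_eq) (simp_all add: wedge_norm_nonneg)
  then have "cmod (cdot c q) \<in> {wedge_norm q x | x. cdot c x = 0 \<and> norm x = 1}"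
    using x by (intro CollectI exI[of _ x]) simp
  then show ?thesis
    unfolding dist_pt_hyp_def using lower by (intro cInf_eq_minimum) auto
qed

text \<open>The determinant bound applied to U (dual vector
  P_j0) and to the vertex matrix V (dual vector u_j0), for j0 realising d_min, gives
  |det U|, |det V| \<le> d_min, and d_min^(n+1) \<le> prod_j |e_j| = |det U| |det V| \<le> |det U| d_min.\<close>
theorem mainTheorem10:
  fixes U :: "complex^'n^'n" and P :: "'n \<Rightarrow> complex^'n"
  assumes n1: "CARD('n) \<ge> 2"
    and unit: "\<forall>i. norm (U$i) = 1"
    and indep: "lin_indep_family (\<lambda>i. U$i)"
    and vert: "\<forall>j. norm (P j) = 1 \<and> (\<forall>i. i \<noteq> j \<longrightarrow> cdot (U$i) (P j) = 0)"
  shows "(Min (range (\<lambda>j. dist_pt_hyp (P j) (U$j)))) ^ (CARD('n) - 1) \<le> cmod (det U)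
       \<and> cmod (det U) \<le> Min (range (\<lambda>j. dist_pt_hyp (P j) (U$j)))"
proof -
  define e where "e j = cdot (U$j) (P j)" for j
  define V where "V = (\<chi> j. P j)"
  define d where "d = Min (range (\<lambda>j. dist_pt_hyp (P j) (U$j)))"
  have dist: "dist_pt_hyp (P j) (U$j) = cmod (e j)" for j
    unfolding e_def using dist_pt_hyp_eq[OF n1] vert unit by blast
  have d_le: "d \<le> cmod (e j)" for j
    unfolding d_def dist by (rule Min_le) auto
  have "d \<in> range (\<lambda>j. cmod (e j))"
    unfolding d_def dist by (rule Min_in) auto
  then obtain j0 where j0: "d = cmod (e j0)" by blast
  have det_U: "cmod (det U) \<le> d"
    using det_le_dot_of_annihilated[of U "P j0" j0] unit vert by (simp add: j0 e_def)
  have det_V: "cmod (det V) \<le> d"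
    using det_le_dot_of_annihilated[of V "U$j0" j0] unit vert by (simp add: j0 e_def V_def cdot_comm)
  have "d ^ CARD('n) \<le> (\<Prod>j\<in>UNIV. cmod (e j))"
    using d_le prod_mono[of UNIV "\<lambda>_. d" "\<lambda>j. cmod (e j)"] j0 by simp
  also have "\<dots> = cmod (det U) * cmod (det V)"
    using det_mult_biorthogonal[of U V] vert by (simp add: V_def e_def prod_norm flip: norm_mult)
  also have "\<dots> \<le> cmod (det U) * d"
    using det_V by (simp add: mult_left_mono)
  finally have "d * d ^ (CARD('n) - 1) \<le> d * cmod (det U)"
    using n1 by (simp add: mult.commute power_eq_if split: if_splits)
  then have "d ^ (CARD('n) - 1) \<le> cmod (det U)"
    using n1 j0 by (cases "d = 0") (auto simp: power_0_left)
  with det_U show ?thesis unfolding d_def by simp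
qed

end
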